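(* Let $\Omega\subset\mathbb{R}^N$ be a domain with $0\in\partial\Omega$, and suppose there are $\rho,h>0$ and a $C^1$ function $\phi:\bar B_\rho(0)\subset\mathbb{R}^{N-1}\to(-h,h)$ with $\phi(0)=0$, $\nabla\phi(0)=0$, such that for $\mathcal{C}=B_\rho(0)\times(-h,h)$: $\mathcal{C}\cap\Omega=\{(x',x_N)\in\mathcal{C}:x_N<\phi(x')\}$ and $\mathcal{C}\cap\partial\Omega=\{(x',x_N)\in\mathcal{C}:x_N=\phi(x')\}$. Let $r>0$ and suppose that either (i) $\Omega$ satisfies condition $(\mathrm{L}_r)$, or (ii) $\nabla\phi$ is Lipschitz continuous with Lipschitz constant at most $\frac1r$. Then $$|\phi(x')|\le\frac{\max_{\bar B_{|x'|}(0)}|\nabla\phi|^2+1}{2r}|x'|^2\qquad\text{for all }x'\in B_\rho(0).$$ Consequently, in both cases, setting $\delta_0=\min\Big\{\frac{r}{\max_{\bar B_\rho(0)}|\nabla\phi|^2+1},\rho,\frac h2\Big\}$, one has $B_{\delta_0}((0,-\delta_0))\subset\Omega$ and $B_{\delta_0}((0,\delta_0))\subset\mathbb{R}^N\setminus\bar\Omega$ (two-sided supporting balls of radius $\delta_0$ at $0$).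
   Context: A domain is an open connected set; balls are open Euclidean balls; points of $\mathbb{R}^N$ are written $(x',x_N)$ with $x'\in\mathbb{R}^{N-1}$. $C^1$ regularity of $\partial\Omega$: for every $x_0\in\partial\Omega$ there exist $\rho,h>0$, a rigid map $T$ (rotation composed with translation) with $T(x_0)=0$, and a $C^1$ function $\phi:\bar B_\rho(0)\to(-h,h)$, $\phi(0)=0$, $\nabla\phi(0)=0$, with $\mathcal{C}\cap T(\Omega)=\{x_N<\phi(x')\}$ and $\mathcal{C}\cap T(\partial\Omega)=\{x_N=\phi(x')\}$ in $\mathcal{C}=B_\rho(0)\times(-h,h)$; then the outward unit normal $\vec n$ on $\partial\Omega$ is well defined. Condition $(\mathrm{L}_r)$: $\partial\Omega$ is $C^1$ regular and $|\vec n(x_0)-\vec n(y_0)|\le\frac1r|x_0-y_0|$ for all $x_0,y_0\in\partial\Omega$. *)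

theory Defs
  imports "HOL-Analysis.Analysis"
begin

text \<open>Points of R^N are pairs (x', x_N) with x' :: 'a (a Euclidean space, playing R^(N-1))
  and x_N :: real.  The product carries the Euclidean inner product and norm.\<close>

definition C1_on_cball :: "real \<Rightarrow> ('a::euclidean_space \<Rightarrow> real) \<Rightarrow> ('a \<Rightarrow> 'a) \<Rightarrow> bool" where
  "C1_on_cball \<rho> \<phi> D\<phi> \<longleftrightarrow>
     (\<forall>x\<in>cball 0 \<rho>. (\<phi> has_derivative (\<lambda>v. D\<phi> x \<bullet> v)) (at x within cball 0 \<rho>))
     \<and> continuous_on (cball 0 \<rho>) D\<phi>"

definition graph_chart :: "('a::euclidean_space \<times> real) set \<Rightarrow> real \<Rightarrow> real \<Rightarrow> ('a \<Rightarrow> real) \<Rightarrow> ('a \<Rightarrow> 'a) \<Rightarrow> bool" where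
  "graph_chart U \<rho> h \<phi> D\<phi> \<longleftrightarrow>
     \<rho> > 0 \<and> h > 0 \<and> C1_on_cball \<rho> \<phi> D\<phi> \<and> \<phi> 0 = 0 \<and> D\<phi> 0 = 0
     \<and> \<phi> ` cball 0 \<rho> \<subseteq> {-h<..<h}
     \<and> (ball 0 \<rho> \<times> {-h<..<h}) \<inter> U = {(x', t). x' \<in> ball 0 \<rho> \<and> -h < t \<and> t < h \<and> t < \<phi> x'}
     \<and> (ball 0 \<rho> \<times> {-h<..<h}) \<inter> frontier U = {(x', t). x' \<in> ball 0 \<rho> \<and> -h < t \<and> t < h \<and> t = \<phi> x'}"

definition boundary_chart :: "('a::euclidean_space \<times> real) set \<Rightarrow> ('a \<times> real) \<Rightarrow> (('a \<times> real) \<Rightarrow> ('a \<times> real)) \<Rightarrow> ('a \<times> real) \<Rightarrow> bool" where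
  "boundary_chart \<Omega> x0 Q b \<longleftrightarrow>
     orthogonal_transformation Q \<and> Q x0 + b = 0
     \<and> (\<exists>\<rho> h \<phi> D\<phi>. graph_chart ((\<lambda>x. Q x + b) ` \<Omega>) \<rho> h \<phi> D\<phi>)"

definition C1_boundary :: "('a::euclidean_space \<times> real) set \<Rightarrow> bool" where
  "C1_boundary \<Omega> \<longleftrightarrow> (\<forall>x0\<in>frontier \<Omega>. \<exists>Q b. boundary_chart \<Omega> x0 Q b)"

text \<open>nu is the outward unit normal at x0: in a chart (where the gradient at 0 vanishes)
  the outward normal is e_N = (0,1), pulled back by the rotation Q.\<close>
definition outward_normal :: "('a::euclidean_space \<times> real) set \<Rightarrow> ('a \<times> real) \<Rightarrow> ('a \<times> real) \<Rightarrow> bool" where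
  "outward_normal \<Omega> x0 \<nu> \<longleftrightarrow> (\<exists>Q b. boundary_chart \<Omega> x0 Q b \<and> Q \<nu> = (0, 1))"

definition cond_L :: "real \<Rightarrow> ('a::euclidean_space \<times> real) set \<Rightarrow> bool" where
  "cond_L r \<Omega> \<longleftrightarrow> C1_boundary \<Omega> \<and>
     (\<forall>x0\<in>frontier \<Omega>. \<forall>y0\<in>frontier \<Omega>. \<forall>\<nu> \<mu>.
        outward_normal \<Omega> x0 \<nu> \<and> outward_normal \<Omega> y0 \<mu> \<longrightarrow> norm (\<nu> - \<mu>) \<le> dist x0 y0 / r)"

end

theory Submission
  imports Defs
begin

(* Near the origin the boundary is the graph of phi, with phi 0 = 0 and D phi 0 = 0.  Both
   hypotheses give a linear bound |D phi y| <= (M + 1) |y| / r, where M is the maximum of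
   |D phi|^2 on the relevant ball: under (ii) directly, and under (L_r) because the unit normal at
   (y, phi y) is a multiple of (- D phi y, 1), so its distance from the normal e_N at the origin is at
   least |D phi y| / sqrt (1 + |D phi y|^2), while (L_r) bounds that distance by
   |(y, phi y)| / r <= sqrt (1 + M) |y| / r.  Integrating along the segment from 0 to x' gives the
   quadratic bound on phi, and the balls of radius delta0 touching the origin from below and from
   above stay between the paraboloids -+|x'|^2 / (2 delta0), hence on either side of the graph. *)

lemma frontier_injective_linear_image:
  fixes f :: "'a::euclidean_space \<Rightarrow> 'a"
  assumes "linear f" "inj f"
  shows "frontier (f ` S) = f ` frontier S"
  unfolding frontier_def
  using closure_injective_linear_image[OF assms] interior_injective_linear_image[OF assms]
    image_set_diff[OF assms(2)] by metis

lemma frontier_rigid_image: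
  fixes Q :: "'a::euclidean_space \<Rightarrow> 'a"
  assumes "orthogonal_transformation Q"
  shows "frontier ((\<lambda>x. Q x + b) ` S) = (\<lambda>x. Q x + b) ` frontier S"
proof -
  have "(\<lambda>x. Q x + b) ` S = (+) b ` Q ` S" for S by (auto simp: image_image add.commute)
  moreover have "linear Q" and "inj Q"
    using assms orthogonal_transformation_linear orthogonal_transformation_inj by auto
  ultimately show ?thesis
    using frontier_injective_linear_image[of Q] by (simp add: frontier_translation)
qed

lemma C1_on_cball_has_derivative:
  assumes "C1_on_cball \<rho> \<phi> D\<phi>" and "y \<in> ball 0 \<rho>"
  shows "(\<phi> has_derivative (\<lambda>v. D\<phi> y \<bullet> v)) (at y)"
proof -
  have "(\<phi> has_derivative (\<lambda>v. D\<phi> y \<bullet> v)) (at y within cball 0 \<rho>)"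
    using assms unfolding C1_on_cball_def by auto
  then show ?thesis using at_within_interior[of y "cball 0 \<rho>"] assms(2) by simp
qed

lemma graph_chart_frontier:
  assumes gc: "graph_chart U \<rho> h \<phi> D\<phi>" and x: "x' \<in> ball 0 \<rho>"
  shows "(x', \<phi> x') \<in> frontier U"
proof -
  have "x' \<in> cball 0 \<rho>" using x by simp
  then have "\<phi> x' \<in> {-h<..<h}" using gc unfolding graph_chart_def by (auto simp: image_subset_iff)
  moreover have fr: "(ball 0 \<rho> \<times> {-h<..<h}) \<inter> frontier U = {(x', t). x' \<in> ball 0 \<rho> \<and> -h < t \<and> t < h \<and> t = \<phi> x'}"
    using gc unfolding graph_chart_def by simp
  ultimately have "(x', \<phi> x') \<in> (ball 0 \<rho> \<times> {-h<..<h}) \<inter> frontier U"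
    unfolding fr using x by auto
  then show ?thesis by blast
qed

lemma graph_chart_curve_horizontal:
  fixes z :: "real \<Rightarrow> 'a::euclidean_space \<times> real"
  assumes gc: "graph_chart U \<rho> h \<psi> D\<psi>" and z0: "z 0 = 0"
    and dz: "(z has_derivative z') (at 0)"
    and on_frontier: "\<forall>\<^sub>F s in at 0. z s \<in> frontier U"
  shows "snd (z' s) = 0"
proof -
  have pos: "\<rho> > 0" "h > 0" and \<psi>0: "\<psi> 0 = 0" "D\<psi> 0 = 0" and C1: "C1_on_cball \<rho> \<psi> D\<psi>"
    and fr: "(ball 0 \<rho> \<times> {-h<..<h}) \<inter> frontier U = {(x', t). x' \<in> ball 0 \<rho> \<and> -h < t \<and> t < h \<and> t = \<psi> x'}"
    using gc unfolding graph_chart_def by auto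
  have "(\<psi> has_derivative (\<lambda>v. 0)) (at (fst (z 0)))"
    using C1_on_cball_has_derivative[OF C1, of 0] pos \<psi>0 z0 by simp
  from has_derivative_compose[OF has_derivative_fst[OF dz] this]
  have d_graph: "((\<lambda>s. \<psi> (fst (z s))) has_derivative (\<lambda>s. 0)) (at 0)" .
  have "\<forall>\<^sub>F s in at 0. z s \<in> ball 0 \<rho> \<times> {-h<..<h}"
    using has_derivative_continuous[OF dz] z0 pos unfolding isCont_def
    by (intro topological_tendstoD) (auto intro!: open_Times simp: zero_prod_def)
  then have "\<forall>\<^sub>F s in at 0. \<psi> (fst (z s)) = snd (z s)"
    using on_frontier
  proof eventually_elim
    case (elim s)
    then have "z s \<in> {(x', t). x' \<in> ball 0 \<rho> \<and> -h < t \<and> t < h \<and> t = \<psi> x'}"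
      unfolding fr[symmetric] by blast
    then show ?case by (cases "z s") simp
  qed
  then have "((\<lambda>s. snd (z s)) has_derivative (\<lambda>s. 0)) (at 0)"
    by (rule has_derivative_transform_eventually[OF d_graph]) (simp_all add: z0 \<psi>0)
  with has_derivative_snd[OF dz] have "(\<lambda>s. snd (z' s)) = (\<lambda>s. 0)"
    by (rule has_derivative_unique)
  then show ?thesis by (rule fun_cong)
qed

lemma outward_normal_orthogonal_graph_tangent:
  fixes \<Omega> :: "('a::euclidean_space \<times> real) set"
  assumes gc: "graph_chart \<Omega> \<rho> h \<phi> D\<phi>" and y: "y \<in> ball 0 \<rho>"
    and normal: "outward_normal \<Omega> (y, \<phi> y) \<nu>"
  shows "\<nu> \<bullet> (v, D\<phi> y \<bullet> v) = 0"
proof -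
  obtain Q b where chart: "boundary_chart \<Omega> (y, \<phi> y) Q b" and Q\<nu>: "Q \<nu> = (0, 1)"
    using normal unfolding outward_normal_def by blast
  then obtain \<rho>' h' \<psi> D\<psi> where oQ: "orthogonal_transformation Q" and Qb: "Q (y, \<phi> y) + b = 0"
    and gc': "graph_chart ((\<lambda>x. Q x + b) ` \<Omega>) \<rho>' h' \<psi> D\<psi>"
    unfolding boundary_chart_def by blast
  have linQ: "linear Q" using oQ orthogonal_transformation_linear by blast
  define \<gamma> where "\<gamma> = (\<lambda>s::real. (y + s *\<^sub>R v, \<phi> (y + s *\<^sub>R v)))"
  have d_line: "((\<lambda>s::real. y + s *\<^sub>R v) has_derivative (\<lambda>s. s *\<^sub>R v)) (at 0)"
    by (auto intro!: derivative_eq_intros)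
  have "(\<phi> has_derivative (\<lambda>v. D\<phi> y \<bullet> v)) (at (y + 0 *\<^sub>R v))"
    using C1_on_cball_has_derivative[OF _ y] gc unfolding graph_chart_def by simp
  from has_derivative_Pair[OF d_line has_derivative_compose[OF d_line this]]
  have "(\<gamma> has_derivative (\<lambda>s. (s *\<^sub>R v, D\<phi> y \<bullet> (s *\<^sub>R v)))) (at 0)"
    unfolding \<gamma>_def .
  then have dz: "((\<lambda>s. Q (\<gamma> s) + b) has_derivative (\<lambda>s. Q (s *\<^sub>R v, D\<phi> y \<bullet> (s *\<^sub>R v)))) (at 0)"
    using bounded_linear.has_derivative[OF linQ[unfolded linear_conv_bounded_linear]]
    by (auto intro!: derivative_eq_intros)
  have "\<forall>\<^sub>F s in at 0. y + s *\<^sub>R v \<in> ball 0 \<rho>"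
    using has_derivative_continuous[OF d_line] y unfolding isCont_def
    by (intro topological_tendstoD) auto
  then have "\<forall>\<^sub>F s in at 0. Q (\<gamma> s) + b \<in> frontier ((\<lambda>x. Q x + b) ` \<Omega>)"
    by eventually_elim (use graph_chart_frontier[OF gc] in \<open>simp add: frontier_rigid_image[OF oQ] \<gamma>_def\<close>)
  from graph_chart_curve_horizontal[OF gc' _ dz this, of 1]
  have "snd (Q (v, D\<phi> y \<bullet> v)) = 0" using Qb by (simp add: \<gamma>_def)
  moreover have "\<nu> \<bullet> (v, D\<phi> y \<bullet> v) = Q \<nu> \<bullet> Q (v, D\<phi> y \<bullet> v)"
    using oQ unfolding orthogonal_transformation_def by metis
  ultimately show ?thesis using Q\<nu> by (cases "Q (v, D\<phi> y \<bullet> v)") (simp add: inner_Pair)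
qed

lemma outward_normal_norm:
  assumes "outward_normal \<Omega> x0 \<nu>"
  shows "norm \<nu> = 1"
proof -
  obtain Q b where "boundary_chart \<Omega> x0 Q b" and "Q \<nu> = (0, 1)"
    using assms unfolding outward_normal_def by blast
  then show ?thesis
    using orthogonal_transformation_norm[of Q \<nu>] unfolding boundary_chart_def by simp
qed

lemma outward_normal_exists:
  assumes "C1_boundary \<Omega>" and "x0 \<in> frontier \<Omega>"
  obtains \<nu> where "outward_normal \<Omega> x0 \<nu>"
proof -
  obtain Q b where chart: "boundary_chart \<Omega> x0 Q b"
    using assms unfolding C1_boundary_def by blast
  then have "surj Q"
    unfolding boundary_chart_def using orthogonal_transformation_surj by blast
  then obtain \<nu> where "Q \<nu> = (0, 1)" by (metis surjD)
  with chart show thesis using that unfolding outward_normal_def by blast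
qed

lemma graph_chart_outward_normal_origin:
  assumes "graph_chart \<Omega> \<rho> h \<phi> D\<phi>"
  shows "outward_normal \<Omega> (0, 0) (0, 1)"
proof -
  have "(\<lambda>x. x + 0) ` \<Omega> = \<Omega>" by simp
  then have "boundary_chart \<Omega> (0, 0) (\<lambda>x. x) 0"
    using assms unfolding boundary_chart_def by (auto simp: zero_prod_def[symmetric])
  then show ?thesis unfolding outward_normal_def by blast
qed

(* A unit vector orthogonal to the graph of v \<mapsto> g \<bullet> v is c (- g, 1) with c^2 (1 + |g|^2) = 1. *)
lemma graph_normal_deviation_bound:
  fixes g :: "'a::real_inner" and \<nu> :: "'a \<times> real"
  assumes perp: "\<And>v. \<nu> \<bullet> (v, g \<bullet> v) = 0" and unit: "norm \<nu> = 1"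
  shows "(norm g)\<^sup>2 \<le> (1 + (norm g)\<^sup>2) * (norm ((0, 1) - \<nu>))\<^sup>2"
proof -
  obtain a c where \<nu>: "\<nu> = (a, c)" by (cases \<nu>)
  have "(a + c *\<^sub>R g) \<bullet> (a + c *\<^sub>R g) = 0"
    using perp[of "a + c *\<^sub>R g"] by (simp add: \<nu> inner_Pair algebra_simps inner_commute)
  then have a: "a = - c *\<^sub>R g" by (simp add: eq_neg_iff_add_eq_0)
  have "(norm a)\<^sup>2 + c\<^sup>2 = 1" using unit by (simp add: \<nu> norm_Pair)
  then have c: "c\<^sup>2 * (norm g)\<^sup>2 + c\<^sup>2 = 1" by (simp add: a power_mult_distrib)
  have "c\<^sup>2 * (norm g)\<^sup>2 \<le> (norm a)\<^sup>2 + (1 - c)\<^sup>2" by (simp add: a power_mult_distrib)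
  also have "\<dots> = (norm ((0, 1) - \<nu>))\<^sup>2" by (simp add: \<nu> norm_Pair)
  finally have "(1 + (norm g)\<^sup>2) * (c\<^sup>2 * (norm g)\<^sup>2) \<le> (1 + (norm g)\<^sup>2) * (norm ((0, 1) - \<nu>))\<^sup>2"
    by (intro mult_left_mono) auto
  moreover have "(1 + (norm g)\<^sup>2) * (c\<^sup>2 * (norm g)\<^sup>2) = (norm g)\<^sup>2" using c by algebra
  ultimately show ?thesis by simp
qed

lemma cond_L_gradient_bound:
  fixes \<Omega> :: "('a::euclidean_space \<times> real) set"
  assumes gc: "graph_chart \<Omega> \<rho> h \<phi> D\<phi>" and L: "cond_L r \<Omega>" and y: "y \<in> ball 0 \<rho>"
  shows "(norm (D\<phi> y))\<^sup>2 \<le> (1 + (norm (D\<phi> y))\<^sup>2) * ((norm y)\<^sup>2 + (\<phi> y)\<^sup>2) / r\<^sup>2"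
proof -
  have "\<rho> > 0" and "\<phi> 0 = 0" using gc unfolding graph_chart_def by auto
  then have origin: "(0, 0) \<in> frontier \<Omega>" using graph_chart_frontier[OF gc, of 0] by simp
  have point: "(y, \<phi> y) \<in> frontier \<Omega>" using graph_chart_frontier[OF gc y] .
  obtain \<nu> where \<nu>: "outward_normal \<Omega> (y, \<phi> y) \<nu>"
    using outward_normal_exists[OF _ point] L unfolding cond_L_def by blast
  have "norm ((0, 1) - \<nu>) \<le> dist (0, 0) (y, \<phi> y) / r"
    using L origin point \<nu> graph_chart_outward_normal_origin[OF gc] unfolding cond_L_def by blast
  also have "\<dots> = sqrt ((norm y)\<^sup>2 + (\<phi> y)\<^sup>2) / r" by (simp add: dist_norm norm_Pair)
  finally have "(norm ((0, 1) - \<nu>))\<^sup>2 \<le> (sqrt ((norm y)\<^sup>2 + (\<phi> y)\<^sup>2) / r)\<^sup>2"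
    by (rule power_mono) simp
  also have "\<dots> = ((norm y)\<^sup>2 + (\<phi> y)\<^sup>2) / r\<^sup>2" by (simp add: power_divide)
  finally have "(norm ((0, 1) - \<nu>))\<^sup>2 \<le> ((norm y)\<^sup>2 + (\<phi> y)\<^sup>2) / r\<^sup>2" .
  then have "(1 + (norm (D\<phi> y))\<^sup>2) * (norm ((0, 1) - \<nu>))\<^sup>2
      \<le> (1 + (norm (D\<phi> y))\<^sup>2) * (((norm y)\<^sup>2 + (\<phi> y)\<^sup>2) / r\<^sup>2)"
    by (intro mult_left_mono) auto
  with graph_normal_deviation_bound[OF outward_normal_orthogonal_graph_tangent[OF gc y \<nu>]
      outward_normal_norm[OF \<nu>]]
  show ?thesis by simp
qed

definition sup_sq_norm :: "('a::real_normed_vector \<Rightarrow> 'b::real_normed_vector) \<Rightarrow> real \<Rightarrow> real" where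
  "sup_sq_norm D s = Sup ((\<lambda>y. (norm (D y))\<^sup>2) ` cball 0 s)"

lemma bdd_above_sq_norm_cball:
  fixes D :: "'a::euclidean_space \<Rightarrow> 'b::real_normed_vector"
  assumes "continuous_on (cball 0 s) D"
  shows "bdd_above ((\<lambda>y. (norm (D y))\<^sup>2) ` cball 0 s)"
proof -
  have "continuous_on (cball 0 s) (\<lambda>y. (norm (D y))\<^sup>2)"
    using assms by (intro continuous_intros)
  then show ?thesis
    by (intro bounded_imp_bdd_above compact_imp_bounded compact_continuous_image) auto
qed

lemma sup_sq_norm_upper:
  fixes D :: "'a::euclidean_space \<Rightarrow> 'b::real_normed_vector"
  assumes "continuous_on (cball 0 s) D" and "norm y \<le> s"
  shows "(norm (D y))\<^sup>2 \<le> sup_sq_norm D s"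
  unfolding sup_sq_norm_def
  by (rule cSup_upper) (use assms bdd_above_sq_norm_cball in auto)

lemma sup_sq_norm_nonneg:
  fixes D :: "'a::euclidean_space \<Rightarrow> 'b::real_normed_vector"
  assumes "continuous_on (cball 0 s) D" and "0 \<le> s"
  shows "0 \<le> sup_sq_norm D s"
proof -
  have "(norm (D 0))\<^sup>2 \<le> sup_sq_norm D s" using sup_sq_norm_upper[OF assms(1)] assms(2) by simp
  then show ?thesis using zero_le_power2[of "norm (D 0)"] by linarith
qed

lemma sup_sq_norm_mono:
  fixes D :: "'a::euclidean_space \<Rightarrow> 'b::real_normed_vector"
  assumes "continuous_on (cball 0 s') D" and "0 \<le> s" and "s \<le> s'"
  shows "sup_sq_norm D s \<le> sup_sq_norm D s'"
  unfolding sup_sq_norm_def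
  by (rule cSup_subset_mono) (use assms bdd_above_sq_norm_cball in auto)

lemma graph_chart_continuous_on_gradient:
  assumes "graph_chart U \<rho> h \<phi> D\<phi>" and "s \<le> \<rho>"
  shows "continuous_on (cball 0 s) D\<phi>"
  using assms unfolding graph_chart_def C1_on_cball_def by (meson continuous_on_subset subset_cball)

lemma abs_le_of_deriv_bound_linear:
  fixes g g' :: "real \<Rightarrow> real"
  assumes g0: "g 0 = 0"
    and dg: "\<And>t. 0 \<le> t \<Longrightarrow> t \<le> 1 \<Longrightarrow> (g has_real_derivative g' t) (at t)"
    and bound: "\<And>t. 0 \<le> t \<Longrightarrow> t \<le> 1 \<Longrightarrow> \<bar>g' t\<bar> \<le> a * t + b"
  shows "\<bar>g 1\<bar> \<le> a / 2 + b"
proof -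
  define G where "G = (\<lambda>t::real. a * t\<^sup>2 / 2 + b * t)"
  have dG: "(G has_real_derivative (a * t + b)) (at t)" for t
    unfolding G_def by (auto intro!: derivative_eq_intros)
  have "(\<lambda>t. g t - G t) 1 \<le> (\<lambda>t. g t - G t) 0"
  proof (rule DERIV_nonpos_imp_nonincreasing[of 0 1])
    fix t :: real assume t: "0 \<le> t" "t \<le> 1"
    then show "\<exists>y. ((\<lambda>t. g t - G t) has_real_derivative y) (at t) \<and> y \<le> 0"
      using DERIV_diff[OF dg[OF t] dG] bound[OF t]
      by (intro exI[of _ "g' t - (a * t + b)"] conjI) (auto simp: abs_le_iff)
  qed simp
  moreover have "(\<lambda>t. g t + G t) 0 \<le> (\<lambda>t. g t + G t) 1"
  proof (rule DERIV_nonneg_imp_nondecreasing[of 0 1])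
    fix t :: real assume t: "0 \<le> t" "t \<le> 1"
    then show "\<exists>y. ((\<lambda>t. g t + G t) has_real_derivative y) (at t) \<and> y \<ge> 0"
      using DERIV_add[OF dg[OF t] dG] bound[OF t]
      by (intro exI[of _ "g' t + (a * t + b)"] conjI) (auto simp: abs_le_iff)
  qed simp
  ultimately show ?thesis using g0 by (simp add: G_def abs_le_iff)
qed

lemma C1_on_cball_abs_le_segment:
  assumes C1: "C1_on_cball \<rho> \<phi> D\<phi>" and "\<phi> 0 = 0" and x: "x \<in> ball 0 \<rho>"
    and bound: "\<And>t. 0 \<le> t \<Longrightarrow> t \<le> 1 \<Longrightarrow> norm (D\<phi> (t *\<^sub>R x)) \<le> a * t + b"
  shows "\<bar>\<phi> x\<bar> \<le> (a / 2 + b) * norm x"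
proof -
  have "\<bar>\<phi> (1 *\<^sub>R x)\<bar> \<le> (a * norm x) / 2 + b * norm x"
  proof (rule abs_le_of_deriv_bound_linear[where g' = "\<lambda>t. D\<phi> (t *\<^sub>R x) \<bullet> x"])
    fix t :: real assume t: "0 \<le> t" "t \<le> 1"
    then have "norm (t *\<^sub>R x) \<le> norm x" by (simp add: mult_left_le_one_le)
    with x have d\<phi>: "(\<phi> has_derivative (\<lambda>v. D\<phi> (t *\<^sub>R x) \<bullet> v)) (at (t *\<^sub>R x))"
      by (intro C1_on_cball_has_derivative[OF C1]) simp
    have "((\<lambda>t. t *\<^sub>R x) has_derivative (\<lambda>s. s *\<^sub>R x)) (at t)"
      by (auto intro!: derivative_eq_intros)
    from has_derivative_compose[OF this d\<phi>]
    show "((\<lambda>t. \<phi> (t *\<^sub>R x)) has_real_derivative D\<phi> (t *\<^sub>R x) \<bullet> x) (at t)"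
      by (simp add: has_field_derivative_def mult_commute_abs)
    have "\<bar>D\<phi> (t *\<^sub>R x) \<bullet> x\<bar> \<le> norm (D\<phi> (t *\<^sub>R x)) * norm x"
      by (rule Cauchy_Schwarz_ineq2)
    also have "\<dots> \<le> (a * t + b) * norm x" using bound[OF t] by (rule mult_right_mono) simp
    finally show "\<bar>D\<phi> (t *\<^sub>R x) \<bullet> x\<bar> \<le> a * norm x * t + b * norm x"
      by (simp add: algebra_simps)
  qed (use \<open>\<phi> 0 = 0\<close> in simp)
  then show ?thesis by (simp add: algebra_simps)
qed

lemma cond_L_gradient_linear_bound:
  fixes \<Omega> :: "('a::euclidean_space \<times> real) set"
  assumes gc: "graph_chart \<Omega> \<rho> h \<phi> D\<phi>" and L: "cond_L r \<Omega>" and r: "r > 0"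
    and y: "norm y \<le> s" and s: "s < \<rho>"
  shows "norm (D\<phi> y) \<le> (sup_sq_norm D\<phi> s + 1) / r * norm y"
proof -
  define M where "M = sup_sq_norm D\<phi> s"
  have cont: "continuous_on (cball 0 s) D\<phi>"
    using graph_chart_continuous_on_gradient[OF gc] s by simp
  have M0: "0 \<le> M" unfolding M_def using sup_sq_norm_nonneg[OF cont] y norm_ge_zero[of y] by linarith
  have grad: "(norm (D\<phi> z))\<^sup>2 \<le> M" if "norm z \<le> s" for z
    unfolding M_def using sup_sq_norm_upper[OF cont that] .
  have yb: "y \<in> ball 0 \<rho>" using y s by simp
  have "\<bar>\<phi> y\<bar> \<le> (0 / 2 + sqrt M) * norm y"
  proof (rule C1_on_cball_abs_le_segment[OF _ _ yb])
    fix t :: real assume "0 \<le> t" "t \<le> 1"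
    then have "norm (t *\<^sub>R y) \<le> s" using y mult_left_le_one_le[of "norm y" t] by auto
    then show "norm (D\<phi> (t *\<^sub>R y)) \<le> 0 * t + sqrt M" using grad by (simp add: real_le_rsqrt)
  qed (use gc in \<open>simp_all add: graph_chart_def\<close>)
  then have "(\<phi> y)\<^sup>2 \<le> (sqrt M * norm y)\<^sup>2" using power_mono[of "\<bar>\<phi> y\<bar>" _ 2] by simp
  then have \<phi>y: "(\<phi> y)\<^sup>2 \<le> M * (norm y)\<^sup>2" using M0 by (simp add: power_mult_distrib)
  have "(norm (D\<phi> y))\<^sup>2 \<le> (1 + (norm (D\<phi> y))\<^sup>2) * ((norm y)\<^sup>2 + (\<phi> y)\<^sup>2) / r\<^sup>2"
    by (rule cond_L_gradient_bound[OF gc L yb])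
  also have "\<dots> \<le> (1 + M) * ((1 + M) * (norm y)\<^sup>2) / r\<^sup>2"
    using grad[OF y] \<phi>y M0 by (intro divide_right_mono mult_mono) (auto simp: algebra_simps)
  also have "\<dots> = ((M + 1) / r * norm y)\<^sup>2"
    by (simp add: power_divide power_mult_distrib power2_eq_square add.commute)
  finally have "(norm (D\<phi> y))\<^sup>2 \<le> ((M + 1) / r * norm y)\<^sup>2" .
  then show ?thesis unfolding M_def[symmetric]
    by (rule power2_le_imp_le) (use M0 r in auto)
qed

lemma graph_chart_gradient_linear_bound:
  fixes \<Omega> :: "('a::euclidean_space \<times> real) set"
  assumes gc: "graph_chart \<Omega> \<rho> h \<phi> D\<phi>" and r: "r > 0"
    and hyp: "cond_L r \<Omega> \<or> (\<forall>x\<in>cball 0 \<rho>. \<forall>y\<in>cball 0 \<rho>. norm (D\<phi> x - D\<phi> y) \<le> dist x y / r)"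
    and y: "norm y \<le> s" and s: "s < \<rho>"
  shows "norm (D\<phi> y) \<le> (sup_sq_norm D\<phi> s + 1) / r * norm y"
proof (cases "cond_L r \<Omega>")
  case True
  then show ?thesis using cond_L_gradient_linear_bound[OF gc _ r y s] by simp
next
  case False
  with hyp have lip: "\<forall>x\<in>cball 0 \<rho>. \<forall>y\<in>cball 0 \<rho>. norm (D\<phi> x - D\<phi> y) \<le> dist x y / r" by simp
  have D0: "D\<phi> 0 = 0" using gc unfolding graph_chart_def by simp
  have s0: "0 \<le> s" using y norm_ge_zero[of y] by linarith
  have "y \<in> cball 0 \<rho>" and "0 \<in> cball (0::'a) \<rho>" using y s s0 by auto
  then have "norm (D\<phi> y) \<le> norm y / r" using lip D0 by fastforce
  also have "\<dots> \<le> (sup_sq_norm D\<phi> s + 1) * norm y / r"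
    using sup_sq_norm_nonneg[OF graph_chart_continuous_on_gradient[OF gc] s0] s r
    by (intro divide_right_mono) (simp_all add: algebra_simps)
  finally show ?thesis by simp
qed

lemma graph_chart_abs_le_quadratic:
  fixes \<Omega> :: "('a::euclidean_space \<times> real) set"
  assumes gc: "graph_chart \<Omega> \<rho> h \<phi> D\<phi>" and r: "r > 0"
    and hyp: "cond_L r \<Omega> \<or> (\<forall>x\<in>cball 0 \<rho>. \<forall>y\<in>cball 0 \<rho>. norm (D\<phi> x - D\<phi> y) \<le> dist x y / r)"
    and x: "x \<in> ball 0 \<rho>"
  shows "\<bar>\<phi> x\<bar> \<le> (sup_sq_norm D\<phi> (norm x) + 1) / (2 * r) * (norm x)\<^sup>2"
proof -
  define M where "M = sup_sq_norm D\<phi> (norm x)"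
  have "\<bar>\<phi> x\<bar> \<le> ((M + 1) / r * norm x / 2 + 0) * norm x"
  proof (rule C1_on_cball_abs_le_segment[OF _ _ x])
    fix t :: real assume t: "0 \<le> t" "t \<le> 1"
    then have "norm (t *\<^sub>R x) \<le> norm x" by (simp add: mult_left_le_one_le)
    from graph_chart_gradient_linear_bound[OF gc r hyp this] x
    have "norm (D\<phi> (t *\<^sub>R x)) \<le> (M + 1) / r * norm (t *\<^sub>R x)" unfolding M_def by simp
    then show "norm (D\<phi> (t *\<^sub>R x)) \<le> (M + 1) / r * norm x * t + 0"
      using t by (simp add: algebra_simps)
  qed (use gc in \<open>simp_all add: graph_chart_def\<close>)
  then show ?thesis unfolding M_def by (simp add: power2_eq_square)
qed

lemma graph_chart_abs_le_paraboloid: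
  fixes \<Omega> :: "('a::euclidean_space \<times> real) set"
  assumes gc: "graph_chart \<Omega> \<rho> h \<phi> D\<phi>" and r: "r > 0"
    and hyp: "cond_L r \<Omega> \<or> (\<forall>x\<in>cball 0 \<rho>. \<forall>y\<in>cball 0 \<rho>. norm (D\<phi> x - D\<phi> y) \<le> dist x y / r)"
    and \<delta>: "\<delta> \<le> \<rho>" "\<delta> * (sup_sq_norm D\<phi> \<rho> + 1) \<le> r" and a: "norm a < \<delta>"
  shows "\<bar>\<phi> a\<bar> \<le> (norm a)\<^sup>2 / (2 * \<delta>)"
proof -
  have cont: "continuous_on (cball 0 \<rho>) D\<phi>"
    using graph_chart_continuous_on_gradient[OF gc] by simp
  have "0 < \<delta>" using a norm_ge_zero[of a] by linarith
  have "\<bar>\<phi> a\<bar> \<le> (sup_sq_norm D\<phi> (norm a) + 1) / (2 * r) * (norm a)\<^sup>2"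
    using graph_chart_abs_le_quadratic[OF gc r hyp] a \<delta> by simp
  also have "\<dots> \<le> (sup_sq_norm D\<phi> \<rho> + 1) / (2 * r) * (norm a)\<^sup>2"
    using sup_sq_norm_mono[OF cont, of "norm a"] a \<delta> r
    by (intro mult_right_mono divide_right_mono) auto
  also have "\<dots> \<le> 1 / (2 * \<delta>) * (norm a)\<^sup>2"
    using \<open>0 < \<delta>\<close> \<delta> r by (intro mult_right_mono) (simp_all add: field_simps)
  also have "\<dots> = (norm a)\<^sup>2 / (2 * \<delta>)" by simp
  finally show ?thesis .
qed

lemma mem_ball_below_bounds:
  fixes a :: "'a::real_normed_vector" and t \<delta> :: real
  assumes "(a, t) \<in> ball (0, - \<delta>) \<delta>"
  shows "norm a < \<delta>" and "- 2 * \<delta> < t" and "t < - (norm a)\<^sup>2 / (2 * \<delta>)"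
proof -
  define X where "X = (norm a)\<^sup>2 + (t + \<delta>)\<^sup>2"
  have X0: "0 \<le> X" unfolding X_def by simp
  have "(- \<delta> - t)\<^sup>2 = (t + \<delta>)\<^sup>2" by (simp add: power2_eq_square algebra_simps)
  then have "sqrt X < \<delta>" using assms by (simp add: X_def dist_Pair_Pair dist_real_def)
  moreover have "0 \<le> sqrt X" using X0 by simp
  ultimately have \<delta>: "0 < \<delta>" by linarith
  have "(sqrt X)\<^sup>2 < \<delta>\<^sup>2"
    using power_strict_mono[OF \<open>sqrt X < \<delta>\<close> \<open>0 \<le> sqrt X\<close>, of 2] by simp
  then have sq: "(norm a)\<^sup>2 + (t + \<delta>)\<^sup>2 < \<delta>\<^sup>2" using X0 unfolding X_def by simp
  have "(norm a)\<^sup>2 < \<delta>\<^sup>2" using sq zero_le_power2[of "t + \<delta>"] by linarith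
  from power2_less_imp_less[OF this] \<delta> show "norm a < \<delta>" by simp
  have "\<bar>t + \<delta>\<bar>\<^sup>2 < \<delta>\<^sup>2" using sq zero_le_power2[of "norm a"] power2_abs[of "t + \<delta>"] by linarith
  from power2_less_imp_less[OF this] \<delta> have "\<bar>t + \<delta>\<bar> < \<delta>" by simp
  then show "- 2 * \<delta> < t" by linarith
  have "(norm a)\<^sup>2 + t\<^sup>2 + 2 * t * \<delta> < 0" using sq by (simp add: power2_eq_square algebra_simps)
  then have "(norm a)\<^sup>2 < - 2 * t * \<delta>" using zero_le_power2[of t] by linarith
  then show "t < - (norm a)\<^sup>2 / (2 * \<delta>)" using \<delta> by (simp add: field_simps)
qed

lemma mem_ball_above_iff:
  fixes a :: "'a::real_normed_vector"
  shows "(a, t) \<in> ball (0, \<delta>) \<delta> \<longleftrightarrow> (a, - t) \<in> ball (0, - \<delta>) \<delta>"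
  by (simp add: dist_Pair_Pair dist_real_def abs_minus_commute)

lemma graph_chart_ball_below_subset:
  fixes U :: "('a::euclidean_space \<times> real) set"
  assumes gc: "graph_chart U \<rho> h \<phi> D\<phi>" and "\<delta> \<le> \<rho>" and "2 * \<delta> \<le> h"
    and below: "\<And>a. norm a < \<delta> \<Longrightarrow> - (norm a)\<^sup>2 / (2 * \<delta>) \<le> \<phi> a"
  shows "ball (0, - \<delta>) \<delta> \<subseteq> U"
proof
  fix p :: "'a \<times> real" assume "p \<in> ball (0, - \<delta>) \<delta>"
  moreover obtain a t where p_def: "p = (a, t)" by (cases p)
  ultimately have p: "(a, t) \<in> ball (0, - \<delta>) \<delta>" by simp
  note bounds = mem_ball_below_bounds[OF p]
  have "0 < \<delta>" using bounds(1) norm_ge_zero[of a] by linarith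
  then have "0 \<le> (norm a)\<^sup>2 / (2 * \<delta>)" by simp
  moreover have "t < \<phi> a" using bounds(3) below[OF bounds(1)] by linarith
  ultimately have "(a, t) \<in> {(x', t). x' \<in> ball 0 \<rho> \<and> -h < t \<and> t < h \<and> t < \<phi> x'}"
    using bounds assms(2,3) by auto
  moreover have "(ball 0 \<rho> \<times> {-h<..<h}) \<inter> U = {(x', t). x' \<in> ball 0 \<rho> \<and> -h < t \<and> t < h \<and> t < \<phi> x'}"
    using gc unfolding graph_chart_def by simp
  ultimately show "p \<in> U" unfolding p_def by blast
qed

lemma graph_chart_ball_above_subset:
  fixes U :: "('a::euclidean_space \<times> real) set"
  assumes gc: "graph_chart U \<rho> h \<phi> D\<phi>" and "\<delta> \<le> \<rho>" and "2 * \<delta> \<le> h"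
    and above: "\<And>a. norm a < \<delta> \<Longrightarrow> \<phi> a \<le> (norm a)\<^sup>2 / (2 * \<delta>)"
  shows "ball (0, \<delta>) \<delta> \<subseteq> - closure U"
proof
  fix p :: "'a \<times> real" assume "p \<in> ball (0, \<delta>) \<delta>"
  moreover obtain a t where p_def: "p = (a, t)" by (cases p)
  ultimately have "(a, t) \<in> ball (0, \<delta>) \<delta>" by simp
  then have p: "(a, - t) \<in> ball (0, - \<delta>) \<delta>" using mem_ball_above_iff by blast
  note bounds = mem_ball_below_bounds[OF p]
  have "0 < \<delta>" using bounds(1) norm_ge_zero[of a] by linarith
  then have "0 \<le> (norm a)\<^sup>2 / (2 * \<delta>)" by simp
  then have in_cyl: "(a, t) \<in> ball 0 \<rho> \<times> {-h<..<h}" using bounds assms(2,3) by auto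
  have above_graph: "\<phi> a < t" using bounds(3) above[OF bounds(1)] by linarith
  have U: "(ball 0 \<rho> \<times> {-h<..<h}) \<inter> U = {(x', t). x' \<in> ball 0 \<rho> \<and> -h < t \<and> t < h \<and> t < \<phi> x'}"
    and fr: "(ball 0 \<rho> \<times> {-h<..<h}) \<inter> frontier U = {(x', t). x' \<in> ball 0 \<rho> \<and> -h < t \<and> t < h \<and> t = \<phi> x'}"
    using gc unfolding graph_chart_def by simp_all
  have "(a, t) \<notin> ((ball 0 \<rho> \<times> {-h<..<h}) \<inter> U) \<union> ((ball 0 \<rho> \<times> {-h<..<h}) \<inter> frontier U)"
    unfolding U fr using above_graph by auto
  then have "(a, t) \<notin> U \<union> frontier U" using in_cyl by blast
  then show "p \<in> - closure U" unfolding p_def closure_Un_frontier by blast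
qed

theorem lemma4p1:
  fixes \<Omega> :: "('a::euclidean_space \<times> real) set"
    and \<phi> :: "'a \<Rightarrow> real" and D\<phi> :: "'a \<Rightarrow> 'a"
    and \<rho> h r :: real
  assumes "open \<Omega>" and "connected \<Omega>" and "(0, 0) \<in> frontier \<Omega>"
    and "graph_chart \<Omega> \<rho> h \<phi> D\<phi>"
    and "r > 0"
    and "cond_L r \<Omega> \<or> (\<forall>x\<in>cball 0 \<rho>. \<forall>y\<in>cball 0 \<rho>. norm (D\<phi> x - D\<phi> y) \<le> dist x y / r)"
  shows "(\<forall>x'\<in>ball 0 \<rho>.
           \<bar>\<phi> x'\<bar> \<le> (Sup ((\<lambda>y. (norm (D\<phi> y))\<^sup>2) ` cball 0 (norm x')) + 1) / (2 * r) * (norm x')\<^sup>2)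
       \<and> (let \<delta>0 = min (r / (Sup ((\<lambda>y. (norm (D\<phi> y))\<^sup>2) ` cball 0 \<rho>) + 1)) (min \<rho> (h / 2))
          in ball (0, - \<delta>0) \<delta>0 \<subseteq> \<Omega> \<and> ball (0, \<delta>0) \<delta>0 \<subseteq> - closure \<Omega>)"
proof -
  note gc = assms(4) and r = assms(5) and hyp = assms(6)
  define S where "S = sup_sq_norm D\<phi> \<rho>"
  have "0 < \<rho>" using gc unfolding graph_chart_def by simp
  then have "0 \<le> S"
    unfolding S_def using sup_sq_norm_nonneg[OF graph_chart_continuous_on_gradient[OF gc order_refl]]
    by simp
  define \<delta> where "\<delta> = min (r / (S + 1)) (min \<rho> (h / 2))"
  have \<delta>: "\<delta> \<le> \<rho>" "2 * \<delta> \<le> h" "\<delta> \<le> r / (S + 1)" unfolding \<delta>_def by auto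
  with \<open>0 \<le> S\<close> have "\<delta> * (S + 1) \<le> r" by (simp add: le_divide_eq)
  then have parabola: "- (norm a)\<^sup>2 / (2 * \<delta>) \<le> \<phi> a \<and> \<phi> a \<le> (norm a)\<^sup>2 / (2 * \<delta>)"
    if "norm a < \<delta>" for a
    using graph_chart_abs_le_paraboloid[OF gc r hyp \<delta>(1) _ that] unfolding S_def abs_le_iff by simp
  have "ball (0, - \<delta>) \<delta> \<subseteq> \<Omega>"
    using graph_chart_ball_below_subset[OF gc \<delta>(1,2)] parabola by blast
  moreover have "ball (0, \<delta>) \<delta> \<subseteq> - closure \<Omega>"
    using graph_chart_ball_above_subset[OF gc \<delta>(1,2)] parabola by blast
  ultimately show ?thesis
    using graph_chart_abs_le_quadratic[OF gc r hyp]
    unfolding sup_sq_norm_def Let_def \<delta>_def S_def by blast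
qed

end
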